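(* Let $0<c\le1<F$ be constants. There is a constant $K_4>0$ (depending only on $c,F$) such that for every sufficiently small $\varepsilon>0$ there exists $s_1>0$ such that for all $s\ge s_1$ there is a constant $\delta>0$ with the following property for all sufficiently large $n$: at every time $t$ with $\varepsilon n/2\le Z^t\le\varepsilon n$, $$\mathbb E[G_4^{t+1}-G_4^t\mid x^t,\lambda^t]\ge\delta,$$ where $G_4^t=Z^t-K_4(\log_F\lambda^t+1)^2$.
   Context: Consider the SA-$(1,\lambda)$-EA on a dynamic monotone function: a function $f:\{0,1\}^n\to\mathbb R$ is monotone if $f(x)>f(y)$ whenever $x\ne y$ and $x_i\ge y_i$ for all $i$; $(f^t)_{t\ge0}$ is a sequence of monotone functions, $f^t$ possibly chosen adversarially depending on $x^t$. The algorithm (with constants $c>0$, $s>0$, $F>1$) maintains $x^t\in\{0,1\}^n$, real $\lambda^t\ge1$; in generation $t$ it creates $\lfloor\lambda^t\rceil$ (nearest integer) offspring, each independently by flipping every bit of $x^t$ independently with probability $c/n$; $x^{t+1}$ is an offspring maximizing $f^t$ (ties uniformly at random); $\lambda^{t+1}=\max\{1,\lambda^t/F\}$ if $f^t(x^{t+1})>f^t(x^t)$, else $\lambda^{t+1}=F^{1/s}\lambda^t$. $Z^t$ is the number of zero-bits of $x^t$. *)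

theory Defs
  imports "HOL-Probability.Probability"
begin

text \<open>Bit strings of length n are bool lists (True = one-bit, False = zero-bit).\<close>

definition bitstrings :: "nat \<Rightarrow> bool list set" where
  "bitstrings n = {x. length x = n}"

definition monotone_fun :: "nat \<Rightarrow> (bool list \<Rightarrow> real) \<Rightarrow> bool" where
  "monotone_fun n f \<longleftrightarrow>
     (\<forall>x\<in>bitstrings n. \<forall>y\<in>bitstrings n.
        x \<noteq> y \<and> (\<forall>i<n. y ! i \<longrightarrow> x ! i) \<longrightarrow> f x > f y)"

definition zeros :: "bool list \<Rightarrow> nat" where
  "zeros x = length (filter Not x)"

definition mutate :: "real \<Rightarrow> nat \<Rightarrow> bool list \<Rightarrow> bool list pmf" where
  "mutate c n x = map_pmf (\<lambda>m. map2 (\<noteq>) x m) (replicate_pmf (length x) (bernoulli_pmf (c / real n)))"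

definition select_best :: "(bool list \<Rightarrow> real) \<Rightarrow> bool list list \<Rightarrow> bool list pmf" where
  "select_best f ys =
     map_pmf (\<lambda>i. ys ! i)
       (pmf_of_set {i. i < length ys \<and> f (ys ! i) = Max (f ` set ys)})"

definition sa_step ::
  "real \<Rightarrow> real \<Rightarrow> real \<Rightarrow> nat \<Rightarrow> (bool list \<Rightarrow> real) \<Rightarrow> bool list \<Rightarrow> real \<Rightarrow> (bool list \<times> real) pmf" where
  "sa_step c s F n f x lam =
     do {
       ys \<leftarrow> replicate_pmf (nat (round lam)) (mutate c n x);
       x' \<leftarrow> select_best f ys;
       return_pmf (x', if f x' > f x then max 1 (lam / F) else F powr (1 / s) * lam)
     }"

definition G4 :: "real \<Rightarrow> real \<Rightarrow> bool list \<Rightarrow> real \<Rightarrow> real" where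
  "G4 F K x lam = real (zeros x) - K * (log F lam + 1)\<^sup>2"

end

theory Submission
  imports Defs
begin

text \<open>
  Write k (about \<lambda>) for the number of offspring and L = log_F \<lambda>. The change of the
  \<lambda>-part of G_4 depends only on whether the generation succeeds, and an offspring that flips
  only zeros to ones beats x under every monotone fitness; so the success probability is at
  least 1 - (1 - q)^k, where q is the probability of such a mutation, and q \<ge> c\<epsilon>/36 when
  \<epsilon>n/2 \<le> Z \<le> \<epsilon>n. The change of Z is bounded below for every possible fittest offspring,
  either by the indicator that all offspring only flip ones to zeros minus the sum of
  (F^m - 1)/(F - 1), or by -log_F of the sum of F^m, where m counts the zero-to-one flips of an
  offspring. Three regimes then give drift at least min ((c/8)^k_0 / 2) (c\<epsilon>): for k \<le> k_0
  all offspring lose ones with probability at least (c/8)^k; for k > k_0 and qk \<le> 1 the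
  generation succeeds with probability at least qk/2 while only O(c\<epsilon>k) zeros are lost in
  expectation; for qk > 1 it succeeds with probability at least 1/2 and the logarithmic bound
  costs only log_F (6\<lambda>), which K L/4 dominates. Taking s large makes the penalty
  K (2L + 3)/s of a failed generation negligible.
\<close>

section \<open>Expectations over finite distributions\<close>

lemma finite_set_pmf_replicate:
  "finite (set_pmf p) \<Longrightarrow> finite (set_pmf (replicate_pmf n p))"
  using finite_lists_length_eq[of "set_pmf p" n] by (simp add: set_replicate_pmf lists_eq_set subset_iff)

lemma expectation_bind_finite:
  fixes h :: "'b \<Rightarrow> real"
  assumes "finite (set_pmf p)" "\<And>a. a \<in> set_pmf p \<Longrightarrow> finite (set_pmf (f a))"
  shows "measure_pmf.expectation (p \<bind> f) h
       = measure_pmf.expectation p (\<lambda>a. measure_pmf.expectation (f a) h)"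
  using pmf_expectation_bind[of "set_pmf p" f p h] assms
    integral_measure_pmf[of "set_pmf p" p "\<lambda>a. measure_pmf.expectation (f a) h"]
  by auto

lemma expectation_mono_finite:
  fixes g h :: "'a \<Rightarrow> real"
  assumes "finite (set_pmf p)" "\<And>a. a \<in> set_pmf p \<Longrightarrow> g a \<le> h a"
  shows "measure_pmf.expectation p g \<le> measure_pmf.expectation p h"
  using assms by (intro integral_mono_AE) (auto simp: integrable_measure_pmf_finite AE_measure_pmf_iff)

lemma expectation_ge_finite:
  fixes g :: "'a \<Rightarrow> real"
  assumes "finite (set_pmf p)" "\<And>a. a \<in> set_pmf p \<Longrightarrow> b \<le> g a"
  shows "b \<le> measure_pmf.expectation p g"
  using expectation_mono_finite[of p "\<lambda>_. b" g] assms by simp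

lemma expectation_replicate_prod_list:
  fixes g :: "'a \<Rightarrow> real"
  assumes "finite (set_pmf p)"
  shows "measure_pmf.expectation (replicate_pmf k p) (\<lambda>ys. prod_list (map g ys))
       = measure_pmf.expectation p g ^ k"
proof (induction k)
  case (Suc k)
  have "measure_pmf.expectation (replicate_pmf (Suc k) p) (\<lambda>ys. prod_list (map g ys))
      = measure_pmf.expectation p
          (\<lambda>y. measure_pmf.expectation (replicate_pmf k p) (\<lambda>ys. g y * prod_list (map g ys)))"
    using assms finite_set_pmf_replicate[OF assms] by (simp add: expectation_bind_finite)
  also have "\<dots> = measure_pmf.expectation p g ^ Suc k"
    using Suc by simp
  finally show ?case .
qed simp

lemma expectation_replicate_sum_list:
  fixes g :: "'a \<Rightarrow> real"
  assumes "finite (set_pmf p)"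
  shows "measure_pmf.expectation (replicate_pmf k p) (\<lambda>ys. sum_list (map g ys))
       = k * measure_pmf.expectation p g"
proof (induction k)
  case (Suc k)
  have "measure_pmf.expectation (replicate_pmf (Suc k) p) (\<lambda>ys. sum_list (map g ys))
      = measure_pmf.expectation p
          (\<lambda>y. measure_pmf.expectation (replicate_pmf k p) (\<lambda>ys. g y + sum_list (map g ys)))"
    using assms finite_set_pmf_replicate[OF assms] by (simp add: expectation_bind_finite)
  also have "\<dots> = measure_pmf.expectation p (\<lambda>y. g y + k * measure_pmf.expectation p g)"
    using Suc finite_set_pmf_replicate[OF assms] by (simp add: integrable_measure_pmf_finite)
  also have "\<dots> = Suc k * measure_pmf.expectation p g"
    using assms by (simp add: integrable_measure_pmf_finite algebra_simps)
  finally show ?case .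
qed simp

lemma expectation_replicate_prod_map2:
  fixes g :: "'b \<Rightarrow> 'a \<Rightarrow> real"
  assumes "finite (set_pmf p)"
  shows "measure_pmf.expectation (replicate_pmf (length xs) p) (\<lambda>ms. prod_list (map2 g xs ms))
       = prod_list (map (\<lambda>x. measure_pmf.expectation p (g x)) xs)"
proof (induction xs)
  case (Cons x xs)
  have "measure_pmf.expectation (replicate_pmf (length (x # xs)) p) (\<lambda>ms. prod_list (map2 g (x # xs) ms))
      = measure_pmf.expectation p
          (\<lambda>m. measure_pmf.expectation (replicate_pmf (length xs) p) (\<lambda>ms. g x m * prod_list (map2 g xs ms)))"
    using assms finite_set_pmf_replicate[OF assms] by (simp add: expectation_bind_finite)
  also have "\<dots> = prod_list (map (\<lambda>x. measure_pmf.expectation p (g x)) (x # xs))"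
    using Cons by simp
  finally show ?case .
qed simp

lemma expectation_log_le:
  fixes Y :: "'a \<Rightarrow> real"
  assumes fin: "finite (set_pmf p)" and pos: "\<And>a. a \<in> set_pmf p \<Longrightarrow> 0 < Y a"
    and F: "1 < F" and A: "0 < A" and bound: "measure_pmf.expectation p Y \<le> A"
  shows "measure_pmf.expectation p (\<lambda>a. log F (Y a)) \<le> log F A"
proof -
  have lnF: "0 < ln F"
    using F by simp
  have tangent: "log F (Y a) \<le> log F A + (Y a / A - 1) / ln F" if "a \<in> set_pmf p" for a
  proof -
    have "ln (Y a / A) \<le> Y a / A - 1"
      using pos[OF that] A by (intro ln_le_minus_one) simp
    then have "(ln (Y a) - ln A) / ln F \<le> (Y a / A - 1) / ln F"
      using pos[OF that] A lnF by (simp add: ln_div divide_right_mono)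
    then show ?thesis
      by (simp add: log_def diff_divide_distrib)
  qed
  have "measure_pmf.expectation p (\<lambda>a. log F (Y a))
      \<le> measure_pmf.expectation p (\<lambda>a. log F A + (Y a / A - 1) / ln F)"
    by (rule expectation_mono_finite[OF fin tangent])
  also have "\<dots> = log F A + (measure_pmf.expectation p Y / A - 1) / ln F"
    using fin by (simp add: integrable_measure_pmf_finite diff_divide_distrib)
  also have "\<dots> \<le> log F A"
    using bound A lnF by (simp add: divide_nonpos_pos)
  finally show ?thesis .
qed

lemma one_minus_mult_le_power:
  fixes p :: real
  assumes "0 \<le> p" "p \<le> 1"
  shows "1 - p * m \<le> (1 - p) ^ m"
  using Bernoulli_inequality[of "- p" m] assms by (simp add: algebra_simps)

lemma mult_div_le_one_minus_power:
  fixes p :: real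
  assumes "0 \<le> p" "p \<le> 1"
  shows "p * m / (1 + p * m) \<le> 1 - (1 - p) ^ m"
proof -
  have "(1 - p) ^ m * (1 + p * m) \<le> (1 - p) ^ m * (1 + p) ^ m"
    using Bernoulli_inequality[of p m] assms by (intro mult_left_mono) (auto simp: algebra_simps)
  also have "\<dots> = (1 - p\<^sup>2) ^ m"
    by (simp add: power_mult_distrib[symmetric] power2_eq_square algebra_simps)
  also have "\<dots> \<le> 1"
  proof (rule power_le_one)
    show "0 \<le> 1 - p\<^sup>2"
      using assms power_le_one[of p 2] by simp
  qed simp
  finally have "(1 - p) ^ m * (1 + p * m) \<le> 1" .
  moreover have "0 < 1 + p * m"
    using assms by (simp add: add_pos_nonneg)
  ultimately show ?thesis
    by (simp add: field_simps)
qed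

lemma exp_le_power_one_minus:
  fixes p :: real
  assumes "0 \<le> p" "p \<le> 1 / 2"
  shows "exp (- 2 * p * m) \<le> (1 - p) ^ m"
proof -
  have "2 * p\<^sup>2 \<le> p"
    using assms mult_left_mono[of "2 * p" 1 p] by (simp add: power2_eq_square)
  then have "- 2 * p \<le> ln (1 - p)"
    using ln_one_minus_pos_lower_bound[OF assms] by linarith
  then have "exp (- 2 * p) \<le> 1 - p"
    using assms by (subst ln_ge_iff[symmetric]) auto
  then have "exp (- 2 * p) ^ m \<le> (1 - p) ^ m"
    by (intro power_mono) auto
  then show ?thesis
    by (simp add: exp_of_nat_mult[symmetric] mult.commute)
qed

lemma power_one_plus_le_exp:
  fixes t :: real
  assumes "0 \<le> t"
  shows "(1 + t) ^ m \<le> exp (t * m)"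
proof -
  have "(1 + t) ^ m \<le> exp t ^ m"
    using assms by (intro power_mono) auto
  then show ?thesis
    by (simp add: exp_of_nat_mult[symmetric] mult.commute)
qed

lemma exp_le_one_plus_two_mult:
  fixes u :: real
  assumes "0 \<le> u" "u \<le> 1"
  shows "exp u \<le> 1 + 2 * u"
  using exp_bound[OF assms] mult_left_mono[of u 1 u] assms by (simp add: power2_eq_square)

lemma exp_minus_two_ge: "1 / 9 \<le> exp (- 2 :: real)"
proof -
  have "exp (1 :: real) \<le> 3"
    using exp_le_one_plus_two_mult[of 1] by simp
  then have "exp (2 :: real) \<le> 9"
    using mult_mono[of "exp (1::real)" 3 "exp 1" 3] by (simp add: exp_add[symmetric])
  then show ?thesis
    by (simp add: exp_minus field_simps)
qed

lemma of_nat_le_power_minus_one_div: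
  fixes F :: real
  assumes "1 < F"
  shows "real m \<le> (F ^ m - 1) / (F - 1)"
  using Bernoulli_inequality[of "F - 1" m] assms by (simp add: field_simps)

section \<open>Bit flips under standard mutation\<close>

definition zero_to_one_flips :: "bool list \<Rightarrow> bool list \<Rightarrow> nat" where
  "zero_to_one_flips x y = length (filter (\<lambda>(a, b). \<not> a \<and> b) (zip x y))"

lemma zeros_le_add_zero_to_one_flips:
  "length x = length y \<Longrightarrow> zeros x \<le> zeros y + zero_to_one_flips x y"
  by (induction x y rule: list_induct2) (auto simp: zeros_def zero_to_one_flips_def)

lemma zeros_less_if_below:
  assumes "list_all2 (\<ge>) x y" "x \<noteq> y"
  shows "zeros x < zeros y"
proof -
  have "zeros x + of_bool (x \<noteq> y) \<le> zeros y"
    using assms(1) by (induction rule: list_all2_induct) (auto simp: zeros_def)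
  then show ?thesis using assms(2) by simp
qed

lemma monotone_fun_less:
  assumes "monotone_fun n f" "length x = n" "list_all2 (\<le>) x y" "x \<noteq> y"
  shows "f x < f y"
  using assms unfolding monotone_fun_def bitstrings_def by (auto simp: list_all2_conv_all_nth)

lemma prod_list_map2_of_bool:
  "length x = length y \<Longrightarrow> prod_list (map2 (\<lambda>a b. of_bool (R a b)) x y) = (of_bool (list_all2 R x y) :: real)"
  by (induction x y rule: list_induct2) auto

lemma prod_list_of_bool:
  "(\<Prod>y\<leftarrow>ys. of_bool (P y)) = (of_bool (\<forall>y\<in>set ys. P y) :: real)"
  by (induction ys) auto

lemma prod_list_one_minus_of_bool:
  "(\<Prod>y\<leftarrow>ys. 1 - of_bool (P y)) = (1 - of_bool (\<exists>y\<in>set ys. P y) :: real)"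
  by (induction ys) auto

lemma power_zero_to_one_flips:
  "length x = length y \<Longrightarrow> F ^ zero_to_one_flips x y = prod_list (map2 (\<lambda>a b. if \<not> a \<and> b then F else 1) x y)"
  by (induction x y rule: list_induct2) (auto simp: zero_to_one_flips_def)

lemma prod_list_map_if_bool:
  "prod_list (map (\<lambda>a. if a then u else v) x) = (u :: real) ^ (length x - zeros x) * v ^ zeros x"
proof (induction x)
  case (Cons a x)
  have "zeros x \<le> length x" by (simp add: zeros_def)
  with Cons show ?case by (auto simp: zeros_def Suc_diff_le)
qed (simp add: zeros_def)

lemma length_mutate: "y \<in> set_pmf (mutate c n x) \<Longrightarrow> length y = length x"
  by (auto simp: mutate_def set_replicate_pmf)

lemma finite_set_pmf_mutate: "finite (set_pmf (mutate c n x))"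
  unfolding mutate_def by (simp add: finite_set_pmf_replicate)

lemma expectation_mutate_prod_map2:
  fixes g :: "bool \<Rightarrow> bool \<Rightarrow> real"
  shows "measure_pmf.expectation (mutate c n x) (\<lambda>y. prod_list (map2 g x y))
       = prod_list (map (\<lambda>a. measure_pmf.expectation (bernoulli_pmf (c / n)) (\<lambda>m. g a (a \<noteq> m))) x)"
proof -
  have map2_map2: "map2 g x (map2 h x m) = map2 (\<lambda>a b. g a (h a b)) x m"
    if "length x = length m" for h and m :: "bool list"
    using that by (induction x m rule: list_induct2) auto
  have "measure_pmf.expectation (mutate c n x) (\<lambda>y. prod_list (map2 g x y))
      = measure_pmf.expectation (replicate_pmf (length x) (bernoulli_pmf (c / n)))
          (\<lambda>m. prod_list (map2 (\<lambda>a b. g a (a \<noteq> b)) x m))"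
    unfolding mutate_def
    by (auto intro!: integral_cong_AE simp: AE_measure_pmf_iff set_replicate_pmf map2_map2)
  then show ?thesis by (simp add: expectation_replicate_prod_map2)
qed

context
  fixes c :: real and n :: nat
  assumes prob_nonneg: "0 \<le> c / n" and prob_le_one: "c / n \<le> 1"
begin

lemma prob_mutate_list_all2:
  "measure_pmf.expectation (mutate c n x) (\<lambda>y. of_bool (list_all2 R x y))
     = prod_list (map (\<lambda>a. of_bool (R a (\<not> a)) * (c / n) + of_bool (R a a) * (1 - c / n)) x)"
proof -
  have "AE y in mutate c n x. of_bool (list_all2 R x y) = (prod_list (map2 (\<lambda>a b. of_bool (R a b)) x y) :: real)"
    by (rule AE_pmfI) (simp add: prod_list_map2_of_bool length_mutate)
  then have "measure_pmf.expectation (mutate c n x) (\<lambda>y. of_bool (list_all2 R x y))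
      = measure_pmf.expectation (mutate c n x) (\<lambda>y. prod_list (map2 (\<lambda>a b. of_bool (R a b) :: real) x y))"
    by (rule integral_cong_AE[rotated 2]) simp_all
  then show ?thesis
    using prob_nonneg prob_le_one by (simp add: expectation_mutate_prod_map2)
qed

lemma prob_mutate_above:
  "measure_pmf.expectation (mutate c n x) (\<lambda>y. of_bool (list_all2 (\<le>) x y))
     = (1 - c / n) ^ (length x - zeros x)"
proof -
  have "map (\<lambda>a. of_bool (a \<le> (\<not> a)) * (c / n) + of_bool (a \<le> a) * (1 - c / n)) x
      = map (\<lambda>a. if a then 1 - c / n else 1) x"
    by (intro map_cong) auto
  then show ?thesis by (simp only: prob_mutate_list_all2 prod_list_map_if_bool power_one mult_1_right mult_1)
qed

lemma prob_mutate_below: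
  "measure_pmf.expectation (mutate c n x) (\<lambda>y. of_bool (list_all2 (\<ge>) x y))
     = (1 - c / n) ^ zeros x"
proof -
  have "map (\<lambda>a. of_bool ((\<not> a) \<le> a) * (c / n) + of_bool (a \<le> a) * (1 - c / n)) x
      = map (\<lambda>a. if a then 1 else 1 - c / n) x"
    by (intro map_cong) auto
  then show ?thesis by (simp only: prob_mutate_list_all2 prod_list_map_if_bool power_one mult_1_right mult_1)
qed

lemma prob_mutate_unchanged:
  "measure_pmf.expectation (mutate c n x) (\<lambda>y. of_bool (y = x)) = (1 - c / n) ^ length x"
proof -
  have "measure_pmf.expectation (mutate c n x) (\<lambda>y. of_bool (y = x))
      = measure_pmf.expectation (mutate c n x) (\<lambda>y. of_bool (list_all2 (=) x y) :: real)"
    by (simp add: list.rel_eq eq_commute)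
  also have "\<dots> = prod_list (map (\<lambda>a. 1 - c / n) x)"
    by (simp add: prob_mutate_list_all2)
  finally show ?thesis by (simp add: map_replicate_const)
qed

lemma prob_mutate_strict:
  assumes "\<And>a. R a a"
  shows "measure_pmf.expectation (mutate c n x) (\<lambda>y. of_bool (list_all2 R x y \<and> y \<noteq> x))
     = measure_pmf.expectation (mutate c n x) (\<lambda>y. of_bool (list_all2 R x y)) - (1 - c / n) ^ length x"
proof -
  have "of_bool (list_all2 R x y \<and> y \<noteq> x) = (of_bool (list_all2 R x y) - of_bool (y = x) :: real)" for y
    using assms by (auto intro: list.rel_refl)
  then have "measure_pmf.expectation (mutate c n x) (\<lambda>y. of_bool (list_all2 R x y \<and> y \<noteq> x))
      = measure_pmf.expectation (mutate c n x) (\<lambda>y. of_bool (list_all2 R x y) - of_bool (y = x) :: real)"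
    by simp
  also have "\<dots> = measure_pmf.expectation (mutate c n x) (\<lambda>y. of_bool (list_all2 R x y))
      - measure_pmf.expectation (mutate c n x) (\<lambda>y. of_bool (y = x))"
    by (rule Bochner_Integration.integral_diff) (simp_all add: integrable_measure_pmf_finite finite_set_pmf_mutate)
  finally show ?thesis
    by (simp only: prob_mutate_unchanged)
qed

lemma prob_mutate_strictly_above:
  "measure_pmf.expectation (mutate c n x) (\<lambda>y. of_bool (list_all2 (\<le>) x y \<and> y \<noteq> x))
     = (1 - c / n) ^ (length x - zeros x) - (1 - c / n) ^ length x"
  by (simp only: prob_mutate_strict[of "(\<le>)", OF order_refl] prob_mutate_above)

lemma prob_mutate_strictly_below:
  "measure_pmf.expectation (mutate c n x) (\<lambda>y. of_bool (list_all2 (\<ge>) x y \<and> y \<noteq> x))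
     = (1 - c / n) ^ zeros x - (1 - c / n) ^ length x"
  by (simp only: prob_mutate_strict[of "(\<ge>)", OF order_refl] prob_mutate_below)

lemma expectation_mutate_power_flips:
  "measure_pmf.expectation (mutate c n x) (\<lambda>y. F ^ zero_to_one_flips x y)
     = (1 + (F - 1) * (c / n)) ^ zeros x"
proof -
  have "measure_pmf.expectation (mutate c n x) (\<lambda>y. F ^ zero_to_one_flips x y)
      = measure_pmf.expectation (mutate c n x)
          (\<lambda>y. prod_list (map2 (\<lambda>a b. if \<not> a \<and> b then F else 1) x y))"
    by (intro integral_cong_AE) (auto simp: AE_measure_pmf_iff power_zero_to_one_flips length_mutate)
  also have "\<dots> = prod_list (map (\<lambda>a. if a then 1 else 1 + (F - 1) * (c / n)) x)"
    unfolding expectation_mutate_prod_map2 using prob_nonneg prob_le_one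
    by (intro arg_cong[where f = prod_list] map_cong) (auto simp: left_diff_distrib diff_divide_distrib)
  finally show ?thesis by (simp add: prod_list_map_if_bool)
qed

end

lemma select_best_support:
  assumes "ys \<noteq> []"
  shows "finite (set_pmf (select_best f ys))"
    and "x' \<in> set_pmf (select_best f ys) \<Longrightarrow> x' \<in> set ys \<and> (\<forall>y\<in>set ys. f y \<le> f x')"
proof -
  let ?S = "{i. i < length ys \<and> f (ys ! i) = Max (f ` set ys)}"
  have "Max (f ` set ys) \<in> f ` set ys"
    using assms by (intro Max_in) auto
  then have "?S \<noteq> {}"
    by (auto simp: in_set_conv_nth)
  then have support: "set_pmf (select_best f ys) = (\<lambda>i. ys ! i) ` ?S"
    unfolding select_best_def by simp
  then show "finite (set_pmf (select_best f ys))"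
    by simp
  show "x' \<in> set ys \<and> (\<forall>y\<in>set ys. f y \<le> f x')" if "x' \<in> set_pmf (select_best f ys)"
    using that unfolding support by auto
qed

lemma log_lambda_after_success:
  assumes "1 < F" "1 \<le> lam"
  shows "log F (max 1 (lam / F)) = max 0 (log F lam - 1)"
proof (cases "1 \<le> lam / F")
  case True
  then show ?thesis
    using assms by (simp add: log_divide_pos)
next
  case False
  then have "log F lam < 1"
    using assms by (simp add: log_less_one_cancel_iff field_simps)
  with False assms show ?thesis
    by simp
qed

lemma log_lambda_after_failure:
  assumes "1 < F" "0 < lam"
  shows "log F (F powr (1 / s) * lam) = log F lam + 1 / s"
  using assms by (simp add: log_mult)

text \<open>
  For L = log_F \<lambda>, the expected decrease of (L + 1)^2 in a generation that succeeds with
  probability P: success replaces \<lambda> by max 1 (\<lambda>/F), failure by F^(1/s) \<lambda>.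
\<close>

definition log_drift :: "real \<Rightarrow> real \<Rightarrow> real \<Rightarrow> real" where
  "log_drift s L P = P * ((L + 1)\<^sup>2 - (max 0 (L - 1) + 1)\<^sup>2) + (1 - P) * ((L + 1)\<^sup>2 - (L + 1 / s + 1)\<^sup>2)"

lemma failure_penalty_ge:
  fixes L s :: real
  assumes "0 \<le> L" "1 \<le> s"
  shows "- ((2 * L + 3) / s) \<le> (L + 1)\<^sup>2 - (L + 1 / s + 1)\<^sup>2"
proof -
  define t where "t = 1 / s"
  have "0 \<le> t" "t \<le> 1"
    using assms by (auto simp: t_def)
  then have "t * t \<le> t"
    by (simp add: mult_left_le_one_le)
  then have "- ((2 * L + 3) * t) \<le> - (2 * (L + 1) * t + t * t)"
    by (simp add: algebra_simps)
  also have "\<dots> = (L + 1)\<^sup>2 - (L + t + 1)\<^sup>2"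
    by (simp add: power2_eq_square algebra_simps)
  finally show ?thesis
    by (simp add: t_def)
qed

lemma success_gain_nonneg:
  fixes L :: real
  assumes "0 \<le> L"
  shows "0 \<le> (L + 1)\<^sup>2 - (max 0 (L - 1) + 1)\<^sup>2"
  using assms by (intro diff_ge_0_iff_ge[THEN iffD2] power_mono) auto

lemma success_gain_eq:
  fixes L :: real
  assumes "1 \<le> L"
  shows "(L + 1)\<^sup>2 - (max 0 (L - 1) + 1)\<^sup>2 = 2 * L + 1"
  using assms by (simp add: power2_eq_square algebra_simps)

lemma half_success_gain_ge:
  fixes a L K :: real
  assumes "1 \<le> L" "0 \<le> a" "8 * a + 8 \<le> K"
  shows "a + L + 1 \<le> K * (1 / 2 * (2 * L + 1)) - K * (2 * L + 3) / 4"
proof -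
  have "(8 * a + 8) * (2 * L - 1) \<le> K * (2 * L - 1)"
    using assms by (intro mult_right_mono) auto
  then have "16 * (a * L) + 16 * L - 8 * a - 8 \<le> 2 * (K * L) - K"
    by (simp add: algebra_simps)
  moreover have "0 \<le> a * (4 * L - 3)"
    using assms by (intro mult_nonneg_nonneg) auto
  then have "12 * a \<le> 16 * (a * L)"
    by (simp add: algebra_simps)
  ultimately have "4 * a + 4 * L + 4 \<le> 2 * (K * L) - K"
    using assms(1) by linarith
  then have "(4 * a + 4 * L + 4) / 4 \<le> (2 * (K * L) - K) / 4"
    by (rule divide_right_mono) simp
  also have "\<dots> = K * (1 / 2 * (2 * L + 1)) - K * (2 * L + 3) / 4"
    by (simp add: field_simps)
  finally show ?thesis
    by simp
qed

lemma log_drift_affine: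
  "log_drift s L P = ((L + 1)\<^sup>2 - (L + 1 / s + 1)\<^sup>2)
     + P * ((L + 1 / s + 1)\<^sup>2 - (max 0 (L - 1) + 1)\<^sup>2)"
  unfolding log_drift_def by (simp add: algebra_simps)

lemma log_drift_mono:
  fixes L s P P' :: real
  assumes "0 \<le> L" "0 < s" "P \<le> P'"
  shows "log_drift s L P \<le> log_drift s L P'"
proof -
  have "0 < 1 / s"
    using assms by simp
  then have "max 0 (L - 1) + 1 \<le> L + 1 / s + 1"
    using assms(1) by linarith
  then have "(max 0 (L - 1) + 1)\<^sup>2 \<le> (L + 1 / s + 1)\<^sup>2"
    by (intro power_mono) auto
  then show ?thesis
    using assms(3) unfolding log_drift_affine by (simp add: mult_right_mono)
qed

lemma log_drift_ge:
  fixes L s P :: real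
  assumes "0 \<le> L" "1 \<le> s" "0 \<le> P" "P \<le> 1"
  shows "P * ((L + 1)\<^sup>2 - (max 0 (L - 1) + 1)\<^sup>2) - (2 * L + 3) / s \<le> log_drift s L P"
proof -
  have "(L + 1)\<^sup>2 \<le> (L + 1 / s + 1)\<^sup>2"
    using assms by (intro power_mono) auto
  then have "0 \<le> P * ((L + 1 / s + 1)\<^sup>2 - (L + 1)\<^sup>2)"
    using assms(3) by simp
  then have "(L + 1)\<^sup>2 - (L + 1 / s + 1)\<^sup>2 \<le> (1 - P) * ((L + 1)\<^sup>2 - (L + 1 / s + 1)\<^sup>2)"
    by (simp add: algebra_simps)
  then have "- (2 * L + 3) / s \<le> (1 - P) * ((L + 1)\<^sup>2 - (L + 1 / s + 1)\<^sup>2)"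
    using failure_penalty_ge[OF assms(1,2)] by linarith
  then show ?thesis
    unfolding log_drift_def by linarith
qed

lemma G4_step_eq:
  assumes "1 < F" "1 \<le> lam"
  shows "G4 F K x' (if success then max 1 (lam / F) else F powr (1 / s) * lam) - G4 F K x lam
       = real (zeros x') - real (zeros x) + K * log_drift s (log F lam) (of_bool success)"
proof (cases success)
  case True
  then show ?thesis
    using assms by (simp add: G4_def log_drift_def log_lambda_after_success algebra_simps)
next
  case False
  moreover have "log F (F powr (1 / s) * lam) = log F lam + 1 / s"
    using assms by (simp add: log_lambda_after_failure)
  ultimately show ?thesis
    by (simp add: G4_def log_drift_def algebra_simps)
qed

lemma offspring_nonempty:
  "1 \<le> lam \<Longrightarrow> ys \<in> set_pmf (replicate_pmf (nat (round lam)) M) \<Longrightarrow> ys \<noteq> []"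
  by (auto simp: set_replicate_pmf round_def)

lemma expectation_G4_change:
  assumes "1 < F" "1 \<le> lam"
  shows "measure_pmf.expectation (sa_step c s F n f x lam) (\<lambda>(x', lam'). G4 F K x' lam' - G4 F K x lam)
       = measure_pmf.expectation (replicate_pmf (nat (round lam)) (mutate c n x))
           (\<lambda>ys. measure_pmf.expectation (select_best f ys)
              (\<lambda>x'. real (zeros x') - real (zeros x) + K * log_drift s (log F lam) (of_bool (f x < f x'))))"
proof -
  have "sa_step c s F n f x lam
      = replicate_pmf (nat (round lam)) (mutate c n x) \<bind>
          (\<lambda>ys. map_pmf (\<lambda>x'. (x', if f x < f x' then max 1 (lam / F) else F powr (1 / s) * lam))
                         (select_best f ys))"
    unfolding sa_step_def by (simp add: map_pmf_def)
  then show ?thesis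
    using finite_set_pmf_replicate[OF finite_set_pmf_mutate] select_best_support(1)[OF offspring_nonempty[OF assms(2)]] assms
    by (simp add: expectation_bind_finite G4_step_eq)
qed

lemma prob_some_offspring_improves:
  assumes "0 \<le> c / n" "c / n \<le> 1" "length x = n"
  shows "measure_pmf.expectation (replicate_pmf k (mutate c n x))
           (\<lambda>ys. of_bool (\<exists>y\<in>set ys. list_all2 (\<le>) x y \<and> y \<noteq> x))
       = 1 - (1 - ((1 - c / n) ^ (n - zeros x) - (1 - c / n) ^ n)) ^ k"
proof -
  let ?improves = "\<lambda>y. list_all2 (\<le>) x y \<and> y \<noteq> x"
  have fin: "finite (set_pmf (replicate_pmf k (mutate c n x)))"
    by (intro finite_set_pmf_replicate finite_set_pmf_mutate)
  have "measure_pmf.expectation (replicate_pmf k (mutate c n x)) (\<lambda>ys. of_bool (\<exists>y\<in>set ys. ?improves y))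
      = 1 - measure_pmf.expectation (replicate_pmf k (mutate c n x)) (\<lambda>ys. \<Prod>y\<leftarrow>ys. 1 - of_bool (?improves y) :: real)"
    using fin by (simp add: prod_list_one_minus_of_bool integrable_measure_pmf_finite)
  also have "\<dots> = 1 - (1 - measure_pmf.expectation (mutate c n x) (\<lambda>y. of_bool (?improves y))) ^ k"
    using finite_set_pmf_mutate by (simp add: expectation_replicate_prod_list integrable_measure_pmf_finite)
  finally show ?thesis
    using prob_mutate_strictly_above[OF assms(1,2)] assms(3) by simp
qed

text \<open>
  An offspring that flips only zeros to ones beats x, so the generation succeeds as soon as one
  offspring does so.
\<close>

lemma sa_step_drift_ge:
  fixes c s F K lam :: real and n :: nat and x :: "bool list" and f :: "bool list \<Rightarrow> real"
    and Zlow :: "bool list list \<Rightarrow> real"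
  defines "offspring \<equiv> replicate_pmf (nat (round lam)) (mutate c n x)"
  assumes x: "x \<in> bitstrings n" and mon: "monotone_fun n f"
    and p: "0 \<le> c / n" "c / n \<le> 1" and lam: "1 \<le> lam" and F: "1 < F" and s: "0 < s" and K: "0 \<le> K"
    and Zlow: "\<And>ys x'. ys \<in> set_pmf offspring \<Longrightarrow> x' \<in> set ys \<Longrightarrow> (\<forall>y\<in>set ys. f y \<le> f x') \<Longrightarrow>
                 Zlow ys \<le> real (zeros x') - real (zeros x)"
  shows "measure_pmf.expectation offspring Zlow
       + K * log_drift s (log F lam) (1 - (1 - ((1 - c / n) ^ (n - zeros x) - (1 - c / n) ^ n)) ^ nat (round lam))
     \<le> measure_pmf.expectation (sa_step c s F n f x lam) (\<lambda>(x', lam'). G4 F K x' lam' - G4 F K x lam)"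
proof -
  define L where "L = log F lam"
  define hit where "hit = (\<lambda>ys. of_bool (\<exists>y\<in>set ys. list_all2 (\<le>) x y \<and> y \<noteq> x) :: real)"
  define gain where "gain = (\<lambda>x'. real (zeros x') - real (zeros x) + K * log_drift s L (of_bool (f x < f x')))"
  have len: "length x = n"
    using x by (simp add: bitstrings_def)
  have fin: "finite (set_pmf offspring)"
    unfolding offspring_def by (intro finite_set_pmf_replicate finite_set_pmf_mutate)
  have nonempty: "ys \<noteq> []" if "ys \<in> set_pmf offspring" for ys
    using offspring_nonempty[OF lam] that unfolding offspring_def by blast
  have pointwise: "Zlow ys + K * log_drift s L (hit ys) \<le> gain x'"
    if ys: "ys \<in> set_pmf offspring" and x': "x' \<in> set_pmf (select_best f ys)" for ys x'
  proof -
    have best: "x' \<in> set ys" "\<forall>y\<in>set ys. f y \<le> f x'"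
      using select_best_support(2)[OF nonempty[OF ys] x'] by auto
    have "hit ys \<le> of_bool (f x < f x')"
    proof (cases "\<exists>y\<in>set ys. list_all2 (\<le>) x y \<and> y \<noteq> x")
      case True
      then obtain y where "y \<in> set ys" "list_all2 (\<le>) x y" "y \<noteq> x"
        by blast
      then have "f x < f y"
        using monotone_fun_less[OF mon len] by simp
      then show ?thesis
        using best \<open>y \<in> set ys\<close> by (auto simp: hit_def)
    qed (auto simp: hit_def)
    then have "K * log_drift s L (hit ys) \<le> K * log_drift s L (of_bool (f x < f x'))"
      using lam F s K by (intro mult_left_mono log_drift_mono) (auto simp: L_def)
    then show ?thesis
      using Zlow[OF ys best] by (simp add: gain_def)
  qed
  have "measure_pmf.expectation offspring Zlow + K * log_drift s L (measure_pmf.expectation offspring hit)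
      = measure_pmf.expectation offspring (\<lambda>ys. Zlow ys + K * log_drift s L (hit ys))"
    using fin by (simp add: log_drift_affine integrable_measure_pmf_finite algebra_simps)
  also have "\<dots> \<le> measure_pmf.expectation offspring (\<lambda>ys. measure_pmf.expectation (select_best f ys) gain)"
    using fin select_best_support(1)[OF nonempty] pointwise
    by (intro expectation_mono_finite expectation_ge_finite)
  finally show ?thesis
    unfolding offspring_def hit_def gain_def L_def expectation_G4_change[OF F lam]
      prob_some_offspring_improves[OF p len] .
qed

text \<open>
  Charging (F^m - 1)/(F - 1) \<ge> m instead of m for m zero-to-one flips makes the cost
  multiplicative over the bits, so its expectation under mutation is explicit.
\<close>

lemma zeros_change_ge_linear:
  assumes F: "1 < F" and len: "\<And>y. y \<in> set ys \<Longrightarrow> length y = length x" and x': "x' \<in> set ys"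
  shows "of_bool (\<forall>y\<in>set ys. list_all2 (\<ge>) x y \<and> y \<noteq> x)
           - (\<Sum>y\<leftarrow>ys. (F ^ zero_to_one_flips x y - 1) / (F - 1))
         \<le> real (zeros x') - real (zeros x)"
proof -
  have cost_nonneg: "0 \<le> (F ^ zero_to_one_flips x y - 1) / (F - 1)" for y
    using F by simp
  have "real (zeros x) - real (zeros x') \<le> zero_to_one_flips x x'"
    using zeros_le_add_zero_to_one_flips[of x x'] len[OF x'] by linarith
  also have "\<dots> \<le> (F ^ zero_to_one_flips x x' - 1) / (F - 1)"
    by (rule of_nat_le_power_minus_one_div[OF F])
  also have "\<dots> \<le> (\<Sum>y\<leftarrow>ys. (F ^ zero_to_one_flips x y - 1) / (F - 1))"
    using x' cost_nonneg by (intro member_le_sum_list) auto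
  finally have lost: "real (zeros x) - real (zeros x') \<le> (\<Sum>y\<leftarrow>ys. (F ^ zero_to_one_flips x y - 1) / (F - 1))" .
  show ?thesis
  proof (cases "\<forall>y\<in>set ys. list_all2 (\<ge>) x y \<and> y \<noteq> x")
    case True
    then have "zeros x < zeros x'"
      using x' zeros_less_if_below by auto
    moreover have "0 \<le> (\<Sum>y\<leftarrow>ys. (F ^ zero_to_one_flips x y - 1) / (F - 1))"
      using cost_nonneg by (intro sum_list_nonneg) auto
    ultimately show ?thesis
      using True by simp
  qed (use lost in auto)
qed

lemma zeros_change_ge_log:
  assumes F: "1 < F" and len: "\<And>y. y \<in> set ys \<Longrightarrow> length y = length x" and x': "x' \<in> set ys"
  shows "- log F (\<Sum>y\<leftarrow>ys. F ^ zero_to_one_flips x y) \<le> real (zeros x') - real (zeros x)"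
proof -
  have le_sum: "F ^ zero_to_one_flips x x' \<le> (\<Sum>y\<leftarrow>ys. F ^ zero_to_one_flips x y)"
    using x' F by (intro member_le_sum_list) auto
  moreover have pos: "0 < F ^ zero_to_one_flips x x'"
    using F by simp
  ultimately have "log F (F ^ zero_to_one_flips x x') \<le> log F (\<Sum>y\<leftarrow>ys. F ^ zero_to_one_flips x y)"
    using F less_le_trans[OF pos le_sum] by (subst log_le_cancel_iff) auto
  moreover have "real (zeros x) - real (zeros x') \<le> zero_to_one_flips x x'"
    using zeros_le_add_zero_to_one_flips[of x x'] len[OF x'] by linarith
  ultimately show ?thesis
    using F by (simp add: log_nat_power)
qed

lemma length_offspring:
  "ys \<in> set_pmf (replicate_pmf k (mutate c n x)) \<Longrightarrow> y \<in> set ys \<Longrightarrow> length y = length x"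
  by (auto simp: set_replicate_pmf length_mutate)

context
  fixes c s F K lam :: real and n :: nat and x :: "bool list" and f :: "bool list \<Rightarrow> real"
  assumes x: "x \<in> bitstrings n" and mon: "monotone_fun n f"
    and p: "0 \<le> c / n" "c / n \<le> 1" and lam: "1 \<le> lam" and F: "1 < F" and s: "0 < s" and K: "0 \<le> K"
begin

lemma sa_step_drift_ge_linear:
  "((1 - c / n) ^ zeros x - (1 - c / n) ^ n) ^ nat (round lam)
     - nat (round lam) * (((1 + (F - 1) * (c / n)) ^ zeros x - 1) / (F - 1))
     + K * log_drift s (log F lam) (1 - (1 - ((1 - c / n) ^ (n - zeros x) - (1 - c / n) ^ n)) ^ nat (round lam))
   \<le> measure_pmf.expectation (sa_step c s F n f x lam) (\<lambda>(x', lam'). G4 F K x' lam' - G4 F K x lam)"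
proof -
  define offspring where "offspring = replicate_pmf (nat (round lam)) (mutate c n x)"
  define worsens where "worsens = (\<lambda>y. list_all2 (\<ge>) x y \<and> y \<noteq> x)"
  define cost where "cost = (\<lambda>y. (F ^ zero_to_one_flips x y - 1) / (F - 1))"
  have fin: "finite (set_pmf offspring)"
    unfolding offspring_def by (intro finite_set_pmf_replicate finite_set_pmf_mutate)
  have "measure_pmf.expectation offspring (\<lambda>ys. of_bool (\<forall>y\<in>set ys. worsens y) - (\<Sum>y\<leftarrow>ys. cost y))
      = measure_pmf.expectation offspring (\<lambda>ys. \<Prod>y\<leftarrow>ys. of_bool (worsens y))
        - measure_pmf.expectation offspring (\<lambda>ys. \<Sum>y\<leftarrow>ys. cost y)"
    using fin by (simp add: prod_list_of_bool integrable_measure_pmf_finite)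
  also have "\<dots> = measure_pmf.expectation (mutate c n x) (\<lambda>y. of_bool (worsens y)) ^ nat (round lam)
        - nat (round lam) * measure_pmf.expectation (mutate c n x) cost"
    unfolding offspring_def
    by (simp add: expectation_replicate_prod_list expectation_replicate_sum_list finite_set_pmf_mutate)
  also have "measure_pmf.expectation (mutate c n x) cost
      = (measure_pmf.expectation (mutate c n x) (\<lambda>y. F ^ zero_to_one_flips x y) - 1) / (F - 1)"
    unfolding cost_def using finite_set_pmf_mutate
    by (simp add: integrable_measure_pmf_finite diff_divide_distrib)
  also have "measure_pmf.expectation (mutate c n x) (\<lambda>y. of_bool (worsens y))
      = (1 - c / n) ^ zeros x - (1 - c / n) ^ n"
    using prob_mutate_strictly_below[OF p, of x] x by (simp add: worsens_def bitstrings_def)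
  finally have "measure_pmf.expectation offspring (\<lambda>ys. of_bool (\<forall>y\<in>set ys. worsens y) - (\<Sum>y\<leftarrow>ys. cost y))
      = ((1 - c / n) ^ zeros x - (1 - c / n) ^ n) ^ nat (round lam)
        - nat (round lam) * (((1 + (F - 1) * (c / n)) ^ zeros x - 1) / (F - 1))"
    by (simp add: expectation_mutate_power_flips[OF p])
  moreover have "measure_pmf.expectation offspring (\<lambda>ys. of_bool (\<forall>y\<in>set ys. worsens y) - (\<Sum>y\<leftarrow>ys. cost y))
       + K * log_drift s (log F lam) (1 - (1 - ((1 - c / n) ^ (n - zeros x) - (1 - c / n) ^ n)) ^ nat (round lam))
     \<le> measure_pmf.expectation (sa_step c s F n f x lam) (\<lambda>(x', lam'). G4 F K x' lam' - G4 F K x lam)"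
    unfolding offspring_def worsens_def cost_def
    by (intro sa_step_drift_ge x mon p lam F s K zeros_change_ge_linear length_offspring)
  ultimately show ?thesis
    by simp
qed

lemma sa_step_drift_ge_log:
  assumes "nat (round lam) * (1 + (F - 1) * (c / n)) ^ zeros x \<le> A"
  shows "- log F A
     + K * log_drift s (log F lam) (1 - (1 - ((1 - c / n) ^ (n - zeros x) - (1 - c / n) ^ n)) ^ nat (round lam))
   \<le> measure_pmf.expectation (sa_step c s F n f x lam) (\<lambda>(x', lam'). G4 F K x' lam' - G4 F K x lam)"
proof -
  define offspring where "offspring = replicate_pmf (nat (round lam)) (mutate c n x)"
  define weight where "weight = (\<lambda>ys. \<Sum>y\<leftarrow>ys. F ^ zero_to_one_flips x y)"
  have fin: "finite (set_pmf offspring)"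
    unfolding offspring_def by (intro finite_set_pmf_replicate finite_set_pmf_mutate)
  have weight_pos: "0 < weight ys" if ys: "ys \<in> set_pmf offspring" for ys
  proof -
    obtain y where y: "y \<in> set ys"
      using ys lam by (cases ys) (auto simp: offspring_def set_replicate_pmf round_def)
    have "0 < F ^ zero_to_one_flips x y"
      using F by simp
    also have "\<dots> \<le> weight ys"
      unfolding weight_def using y F by (intro member_le_sum_list) auto
    finally show ?thesis .
  qed
  have "0 \<le> (F - 1) * (c / n)"
    using F p by (intro mult_nonneg_nonneg) auto
  then have "1 \<le> (1 + (F - 1) * (c / n)) ^ zeros x"
    by (intro one_le_power) linarith
  moreover have "1 \<le> real (nat (round lam))"
    using lam by (simp add: round_def)
  ultimately have "1 * 1 \<le> nat (round lam) * (1 + (F - 1) * (c / n)) ^ zeros x"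
    by (intro mult_mono) auto
  then have "0 < A"
    using assms by linarith
  moreover have "measure_pmf.expectation offspring weight = nat (round lam) * (1 + (F - 1) * (c / n)) ^ zeros x"
    unfolding offspring_def weight_def
    by (simp add: expectation_replicate_sum_list finite_set_pmf_mutate expectation_mutate_power_flips[OF p])
  ultimately have "measure_pmf.expectation offspring (\<lambda>ys. log F (weight ys)) \<le> log F A"
    using assms by (intro expectation_log_le[OF fin weight_pos F]) auto
  moreover have "measure_pmf.expectation offspring (\<lambda>ys. - log F (weight ys))
       + K * log_drift s (log F lam) (1 - (1 - ((1 - c / n) ^ (n - zeros x) - (1 - c / n) ^ n)) ^ nat (round lam))
     \<le> measure_pmf.expectation (sa_step c s F n f x lam) (\<lambda>(x', lam'). G4 F K x' lam' - G4 F K x lam)"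
    unfolding offspring_def weight_def
    by (intro sa_step_drift_ge x mon p lam F s K zeros_change_ge_log length_offspring)
  ultimately show ?thesis
    by simp
qed

end

section \<open>Mutation probabilities when \<epsilon>n/2 \<le> Z \<le> \<epsilon>n\<close>

context
  fixes c eps :: real and n z :: nat
  assumes c: "0 < c" "c \<le> 1" and n: "2 \<le> n" and eps: "0 < eps" "eps \<le> 1 / 2"
    and z: "eps * n / 2 \<le> z" "z \<le> eps * n"
begin

lemma mutation_rate_bounds: "0 < c / n" "c / n \<le> 1 / 2"
  using c n by (auto simp: field_simps)

lemma expected_flipped_zeros_bounds: "c * eps / 2 \<le> c / n * z" "c / n * z \<le> c * eps"
  using z c n by (simp_all add: field_simps)

lemma zeros_le_length: "z \<le> n"
proof -
  have "eps * n \<le> n"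
    using eps mult_left_le_one_le[of "real n" eps] by simp
  then show ?thesis
    using z by linarith
qed

lemma strictly_above_prob_ge: "c * eps / 36 \<le> (1 - c / n) ^ (n - z) - (1 - c / n) ^ n"
proof -
  define p where "p = c / n"
  have p: "0 < p" "p \<le> 1 / 2"
    using mutation_rate_bounds by (simp_all add: p_def)
  have pz: "c * eps / 2 \<le> p * z" "p * z \<le> c * eps"
    using expected_flipped_zeros_bounds by (simp_all add: p_def)
  have "exp (- 2) \<le> exp (- 2 * c)"
    using c by simp
  then have "1 / 9 \<le> exp (- 2 * c)"
    using exp_minus_two_ge by linarith
  also have "\<dots> = exp (- 2 * p * n)"
    using n by (simp add: p_def)
  also have "\<dots> \<le> (1 - p) ^ n"
    using p by (intro exp_le_power_one_minus) auto
  also have "\<dots> \<le> (1 - p) ^ (n - z)"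
    using p by (intro power_decreasing) auto
  finally have stay: "1 / 9 \<le> (1 - p) ^ (n - z)" .
  have "c * eps \<le> 1"
    using c eps by (intro mult_le_one) auto
  then have "p * z / 2 \<le> p * z / (1 + p * z)"
    using pz p by (intro divide_left_mono) auto
  then have "c * eps / 4 \<le> p * z / (1 + p * z)"
    using pz by linarith
  also have "\<dots> \<le> 1 - (1 - p) ^ z"
    using p by (intro mult_div_le_one_minus_power) auto
  finally have flip: "c * eps / 4 \<le> 1 - (1 - p) ^ z" .
  have "c * eps / 36 = (1 / 9) * (c * eps / 4)"
    by simp
  also have "\<dots> \<le> (1 - p) ^ (n - z) * (1 - (1 - p) ^ z)"
    using stay flip c eps by (intro mult_mono) auto
  also have "\<dots> = (1 - p) ^ (n - z) - (1 - p) ^ n"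
    using zeros_le_length by (simp add: algebra_simps power_add[symmetric])
  finally show ?thesis
    by (simp add: p_def)
qed

lemma strictly_below_prob_ge: "c / 8 \<le> (1 - c / n) ^ z - (1 - c / n) ^ n"
proof -
  define p where "p = c / n"
  have p: "0 < p" "p \<le> 1 / 2"
    using mutation_rate_bounds by (simp_all add: p_def)
  have pz: "c * eps / 2 \<le> p * z" "p * z \<le> c * eps"
    using expected_flipped_zeros_bounds by (simp_all add: p_def)
  have ceps: "c * eps \<le> c / 2"
    using c eps by simp
  have "1 / 2 \<le> 1 - p * z"
    using pz ceps c by linarith
  also have "\<dots> \<le> (1 - p) ^ z"
    using p by (intro one_minus_mult_le_power) auto
  finally have stay: "1 / 2 \<le> (1 - p) ^ z" .
  define v where "v = p * (n - z)"
  have v: "v = c - p * z"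
    using n zeros_le_length by (simp add: v_def p_def field_simps)
  moreover have "0 \<le> p * z"
    using p by simp
  ultimately have "c / 2 \<le> v" "v \<le> 1"
    using pz ceps c by linarith+
  then have "v / 2 \<le> v / (1 + v)"
    using c by (intro divide_left_mono) auto
  then have "c / 4 \<le> v / (1 + v)"
    using \<open>c / 2 \<le> v\<close> by linarith
  also have "\<dots> \<le> 1 - (1 - p) ^ (n - z)"
    unfolding v_def using p by (intro mult_div_le_one_minus_power) auto
  finally have flip: "c / 4 \<le> 1 - (1 - p) ^ (n - z)" .
  have "c / 8 = (1 / 2) * (c / 4)"
    by simp
  also have "\<dots> \<le> (1 - p) ^ z * (1 - (1 - p) ^ (n - z))"
    using stay flip c by (intro mult_mono) auto
  also have "\<dots> = (1 - p) ^ z - (1 - p) ^ n"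
    using zeros_le_length by (simp add: algebra_simps power_add[symmetric])
  finally show ?thesis
    by (simp add: p_def)
qed

lemma flip_weight_le:
  assumes F: "1 < F" and "eps \<le> 1 / F"
  shows "(1 + (F - 1) * (c / n)) ^ z \<le> 1 + 2 * ((F - 1) * (c * eps))"
    and "(1 + (F - 1) * (c / n)) ^ z \<le> 3"
proof -
  have "(F - 1) * (c * eps) \<le> F * eps"
    using F c eps by (intro mult_mono) (auto simp: mult_le_cancel_right1)
  also have "\<dots> \<le> 1"
    using assms by (simp add: field_simps)
  finally have small: "(F - 1) * (c * eps) \<le> 1" .
  have "(1 + (F - 1) * (c / n)) ^ z \<le> exp ((F - 1) * (c / n) * z)"
    using F mutation_rate_bounds by (intro power_one_plus_le_exp mult_nonneg_nonneg) auto
  also have "\<dots> \<le> exp ((F - 1) * (c * eps))"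
    using mult_left_mono[OF expected_flipped_zeros_bounds(2), of "F - 1"] F by (simp add: mult.assoc)
  also have "\<dots> \<le> 1 + 2 * ((F - 1) * (c * eps))"
    using F c eps small by (intro exp_le_one_plus_two_mult) auto
  finally show "(1 + (F - 1) * (c / n)) ^ z \<le> 1 + 2 * ((F - 1) * (c * eps))" .
  then show "(1 + (F - 1) * (c / n)) ^ z \<le> 3"
    using small by linarith
qed

end

section \<open>Positive drift\<close>

locale sa_drift_setting =
  fixes c F K eps s lam :: real and k0 n :: nat and x :: "bool list" and f :: "bool list \<Rightarrow> real"
  assumes c: "0 < c" "c \<le> 1" and F: "1 < F"
    and K: "100 \<le> K" "8 * log F 6 + 8 \<le> K"
    and k0: "2 * F \<le> k0"
    and eps: "0 < eps" "eps \<le> 1 / F" "8 * k0 * eps \<le> (c / 8) ^ k0"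
    and s: "4 \<le> s" "K * (2 * log F (k0 + 1) + 3) / ((c / 8) ^ k0 / 4) \<le> s"
      "K * (2 * log F (72 / (c * eps)) + 3) / (c * eps) \<le> s"
    and n: "2 \<le> n" and x: "x \<in> bitstrings n" and mon: "monotone_fun n f" and lam: "1 \<le> lam"
    and zeros: "eps * n / 2 \<le> zeros x" "zeros x \<le> eps * n"
begin

text \<open>
  k is the number of offspring and q the probability that a mutation flips only zeros to ones
  and at least one bit.
\<close>

abbreviation "k \<equiv> nat (round lam)"
abbreviation "L \<equiv> log F lam"
abbreviation "q \<equiv> (1 - c / n) ^ (n - zeros x) - (1 - c / n) ^ n"
abbreviation "drift \<equiv> measure_pmf.expectation (sa_step c s F n f x lam)
                        (\<lambda>(x', lam'). G4 F K x' lam' - G4 F K x lam)"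

lemma eps_le: "eps \<le> 1 / 8"
proof -
  have "(c / 8) ^ k0 \<le> 1"
    using c by (intro power_le_one) auto
  moreover have "1 \<le> real k0"
    using k0 F by linarith
  then have "8 * eps \<le> 8 * k0 * eps"
    using eps by simp
  ultimately show ?thesis
    using eps by linarith
qed

lemma k_bounds: "1 \<le> k" "lam < k + 1 / 2" "k \<le> lam + 1 / 2"
proof -
  have "real k = of_int \<lfloor>lam + 1 / 2\<rfloor>"
    using lam by (simp add: round_def)
  moreover have "1 \<le> \<lfloor>lam + 1 / 2\<rfloor>"
    using lam by linarith
  ultimately show "1 \<le> k" "lam < k + 1 / 2" "k \<le> lam + 1 / 2"
    by linarith+
qed

lemma L_nonneg: "0 \<le> L"
  using F lam by simp

lemma mutation_estimates:
  "c * eps / 36 \<le> q" "c / 8 \<le> (1 - c / n) ^ zeros x - (1 - c / n) ^ n"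
  "(1 + (F - 1) * (c / n)) ^ zeros x \<le> 1 + 2 * ((F - 1) * (c * eps))"
  "(1 + (F - 1) * (c / n)) ^ zeros x \<le> 3"
  using strictly_above_prob_ge strictly_below_prob_ge flip_weight_le F eps_le c n eps zeros by auto

lemma mutation_rate: "0 \<le> c / n" "c / n \<le> 1"
  using c n by (auto simp: field_simps)

lemma s_pos: "0 < s"
  using s by simp

lemma K_nonneg: "0 \<le> K"
  using K by simp

lemma q_bounds: "0 \<le> q" "q \<le> 1"
proof -
  have "0 < c * eps"
    using c eps by simp
  then show "0 \<le> q"
    using mutation_estimates(1) by linarith
  show "q \<le> 1"
    using power_le_one[of "1 - c / n" "n - zeros x"] zero_le_power[of "1 - c / n" n] mutation_rate
    by linarith
qed

lemma success_prob_bounds: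
  "q * k / (1 + q * k) \<le> 1 - (1 - q) ^ k" "0 \<le> 1 - (1 - q) ^ k" "1 - (1 - q) ^ k \<le> 1"
  using mult_div_le_one_minus_power[OF q_bounds] q_bounds by (auto intro: power_le_one)

lemma drift_ge_linear:
  "((1 - c / n) ^ zeros x - (1 - c / n) ^ n) ^ k - k * (((1 + (F - 1) * (c / n)) ^ zeros x - 1) / (F - 1))
     + K * log_drift s L (1 - (1 - q) ^ k) \<le> drift"
  by (rule sa_step_drift_ge_linear[OF x mon mutation_rate lam F s_pos K_nonneg])

lemma drift_ge_log:
  assumes "k * (1 + (F - 1) * (c / n)) ^ zeros x \<le> A"
  shows "- log F A + K * log_drift s L (1 - (1 - q) ^ k) \<le> drift"
  by (rule sa_step_drift_ge_log[OF x mon mutation_rate lam F s_pos K_nonneg assms])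

lemma flip_weight_ge_one: "1 \<le> (1 + (F - 1) * (c / n)) ^ zeros x"
proof -
  have "0 \<le> (F - 1) * (c / n)"
    using F mutation_rate by (intro mult_nonneg_nonneg) auto
  then show ?thesis
    by (intro one_le_power) linarith
qed

lemma flip_cost_bounds:
  "0 \<le> ((1 + (F - 1) * (c / n)) ^ zeros x - 1) / (F - 1)"
  "((1 + (F - 1) * (c / n)) ^ zeros x - 1) / (F - 1) \<le> 2 * (c * eps)"
  using flip_weight_ge_one mutation_estimates(3) F by (simp_all add: field_simps)

lemma scaled_log_drift_ge:
  "K * ((1 - (1 - q) ^ k) * ((L + 1)\<^sup>2 - (max 0 (L - 1) + 1)\<^sup>2)) - K * (2 * L + 3) / s
     \<le> K * log_drift s L (1 - (1 - q) ^ k)"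
proof -
  have "(1 - (1 - q) ^ k) * ((L + 1)\<^sup>2 - (max 0 (L - 1) + 1)\<^sup>2) - (2 * L + 3) / s
      \<le> log_drift s L (1 - (1 - q) ^ k)"
    using s by (intro log_drift_ge L_nonneg success_prob_bounds) auto
  then have "K * ((1 - (1 - q) ^ k) * ((L + 1)\<^sup>2 - (max 0 (L - 1) + 1)\<^sup>2) - (2 * L + 3) / s)
      \<le> K * log_drift s L (1 - (1 - q) ^ k)"
    using K_nonneg by (rule mult_left_mono)
  then show ?thesis
    by (simp add: right_diff_distrib)
qed

lemma penalty_le:
  assumes "lam \<le> \<Lambda>" "0 < B" "K * (2 * log F \<Lambda> + 3) / B \<le> s"
  shows "K * (2 * L + 3) / s \<le> B"
proof -
  have "L \<le> log F \<Lambda>"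
    using assms(1) lam F by simp
  then have "K * (2 * L + 3) \<le> K * (2 * log F \<Lambda> + 3)"
    using K_nonneg by (intro mult_left_mono) auto
  also have "\<dots> \<le> s * B"
    using assms(2,3) by (simp add: field_simps)
  finally show ?thesis
    using s_pos by (simp add: field_simps)
qed

lemma drift_ge_few_offspring:
  assumes "k \<le> k0"
  shows "(c / 8) ^ k0 / 2 \<le> drift"
proof -
  have "(c / 8) ^ k0 \<le> (c / 8) ^ k"
    using c assms by (intro power_decreasing) auto
  also have "\<dots> \<le> ((1 - c / n) ^ zeros x - (1 - c / n) ^ n) ^ k"
    using mutation_estimates(2) c by (intro power_mono) auto
  finally have worsen: "(c / 8) ^ k0 \<le> ((1 - c / n) ^ zeros x - (1 - c / n) ^ n) ^ k" .
  have "k * (((1 + (F - 1) * (c / n)) ^ zeros x - 1) / (F - 1)) \<le> k0 * (2 * (c * eps))"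
    using flip_cost_bounds assms by (intro mult_mono) auto
  also have "\<dots> \<le> k0 * (2 * eps)"
    using c eps by (intro mult_left_mono) auto
  also have "\<dots> = 8 * k0 * eps / 4"
    by simp
  also have "\<dots> \<le> (c / 8) ^ k0 / 4"
    using eps(3) by (simp add: mult.commute mult.left_commute)
  finally have cost: "k * (((1 + (F - 1) * (c / n)) ^ zeros x - 1) / (F - 1)) \<le> (c / 8) ^ k0 / 4" .
  have "lam \<le> k0 + 1"
    using k_bounds(2) assms by linarith
  then have "K * (2 * L + 3) / s \<le> (c / 8) ^ k0 / 4"
    using c s(2) by (intro penalty_le) auto
  moreover have "0 \<le> K * ((1 - (1 - q) ^ k) * ((L + 1)\<^sup>2 - (max 0 (L - 1) + 1)\<^sup>2))"
    using K_nonneg success_prob_bounds(2) success_gain_nonneg[OF L_nonneg] by simp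
  ultimately show ?thesis
    using drift_ge_linear worsen cost scaled_log_drift_ge by linarith
qed

lemma L_ge_one:
  assumes "k0 < k"
  shows "1 \<le> L"
  using k_bounds(3) k0 assms F lam by simp

lemma drift_ge_rare_improvement:
  assumes "k0 < k" "q * k \<le> 1"
  shows "c * eps \<le> drift"
proof -
  define X where "X = c * eps * k"
  have ceps: "0 < c * eps" "c * eps \<le> 1"
    using c eps eps_le by (auto intro: mult_le_one)
  have "c * eps * 1 \<le> c * eps * k"
    using ceps k_bounds(1) by (intro mult_left_mono) auto
  then have X: "c * eps \<le> X"
    by (simp add: X_def)
  have "X / 72 \<le> q * k / 2"
    using mult_right_mono[OF mutation_estimates(1), of k] by (simp add: X_def)
  also have "\<dots> \<le> q * k / (1 + q * k)"
    using assms(2) q_bounds by (intro divide_left_mono) (auto simp: add_pos_nonneg)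
  also have "\<dots> \<le> 1 - (1 - q) ^ k"
    by (rule success_prob_bounds(1))
  finally have "K * (X / 72 * 3) \<le> K * ((1 - (1 - q) ^ k) * ((L + 1)\<^sup>2 - (max 0 (L - 1) + 1)\<^sup>2))"
    using L_ge_one[OF assms(1)] K_nonneg success_gain_eq X ceps
    by (intro mult_left_mono mult_mono) auto
  moreover have "4 * X \<le> K * (X / 72 * 3)"
    using K X ceps mult_right_mono[of 100 K "X / 24"] by simp
  moreover have "lam \<le> 72 / (c * eps)"
  proof -
    have "c * eps / 36 * k \<le> 1"
      using mult_right_mono[OF mutation_estimates(1), of k] assms(2) by simp
    then have "k \<le> 36 / (c * eps)"
      using ceps by (simp add: field_simps)
    moreover have "1 \<le> 36 / (c * eps)"
      using ceps by (simp add: field_simps)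
    ultimately show ?thesis
      using k_bounds(2) by linarith
  qed
  then have "K * (2 * L + 3) / s \<le> c * eps"
    using ceps s(3) by (intro penalty_le) auto
  moreover have "k * (((1 + (F - 1) * (c / n)) ^ zeros x - 1) / (F - 1)) \<le> 2 * X"
    using mult_left_mono[OF flip_cost_bounds(2), of k] by (simp add: X_def algebra_simps)
  moreover have "0 \<le> ((1 - c / n) ^ zeros x - (1 - c / n) ^ n) ^ k"
    using mutation_estimates(2) c by simp
  ultimately show ?thesis
    using drift_ge_linear scaled_log_drift_ge X by linarith
qed

lemma drift_ge_frequent_improvement:
  assumes "k0 < k" "1 < q * k"
  shows "1 \<le> drift"
proof -
  have L: "1 \<le> L"
    using L_ge_one[OF assms(1)] .
  have "1 / 2 \<le> t / (1 + t)" if "1 < t" for t :: real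
    using that by (simp add: field_simps)
  then have "1 / 2 \<le> q * k / (1 + q * k)"
    using assms(2) .
  then have "1 / 2 \<le> 1 - (1 - q) ^ k"
    using success_prob_bounds(1) by linarith
  then have "K * (1 / 2 * (2 * L + 1)) \<le> K * ((1 - (1 - q) ^ k) * (2 * L + 1))"
    using L K_nonneg by (intro mult_left_mono mult_right_mono) auto
  then have "K * (1 / 2 * (2 * L + 1)) \<le> K * ((1 - (1 - q) ^ k) * ((L + 1)\<^sup>2 - (max 0 (L - 1) + 1)\<^sup>2))"
    by (simp only: success_gain_eq[OF L])
  moreover have "K * (2 * L + 3) / s \<le> K * (2 * L + 3) / 4"
    using s(1) L K_nonneg by (intro divide_left_mono) auto
  moreover have "log F 6 + L + 1 \<le> K * (1 / 2 * (2 * L + 1)) - K * (2 * L + 3) / 4"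
    using L F K(2) by (intro half_success_gain_ge) auto
  moreover have "k * (1 + (F - 1) * (c / n)) ^ zeros x \<le> 6 * lam"
  proof -
    have "k * (1 + (F - 1) * (c / n)) ^ zeros x \<le> (2 * lam) * 3"
      using k_bounds(3) lam flip_weight_ge_one mutation_estimates(4) by (intro mult_mono) auto
    then show ?thesis
      by simp
  qed
  then have "- log F (6 * lam) + K * log_drift s L (1 - (1 - q) ^ k) \<le> drift"
    by (rule drift_ge_log)
  moreover have "log F (6 * lam) = log F 6 + L"
    using lam by (simp add: log_mult)
  ultimately show ?thesis
    using scaled_log_drift_ge by linarith
qed

lemma drift_ge: "min ((c / 8) ^ k0 / 2) (c * eps) \<le> drift"
proof (cases "k \<le> k0")
  case True
  then show ?thesis
    using drift_ge_few_offspring by simp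
next
  case False
  have "c * eps \<le> 1"
    using c eps eps_le by (intro mult_le_one) auto
  then have "c * eps \<le> drift"
    using False drift_ge_rare_improvement drift_ge_frequent_improvement by force
  then show ?thesis
    by simp
qed

end

theorem mainTheorem20:
  fixes c F :: real
  assumes "0 < c" and "c \<le> 1" and "1 < F"
  shows "\<exists>K4 > 0. \<exists>\<epsilon>0 > 0. \<forall>\<epsilon>. 0 < \<epsilon> \<and> \<epsilon> < \<epsilon>0 \<longrightarrow>
           (\<exists>s1 > 0. \<forall>s \<ge> s1. \<exists>\<delta> > 0. \<exists>N. \<forall>n \<ge> N.
              \<forall>x \<in> bitstrings n. \<forall>lam \<ge> 1. \<forall>f. monotone_fun n f \<longrightarrow>
                \<epsilon> * real n / 2 \<le> real (zeros x) \<and> real (zeros x) \<le> \<epsilon> * real n \<longrightarrow>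
                measure_pmf.expectation (sa_step c s F n f x lam)
                  (\<lambda>(x', lam'). G4 F K4 x' lam' - G4 F K4 x lam) \<ge> \<delta>)"
proof -
  define K where "K = max 100 (8 * log F 6 + 8)"
  define k0 where "k0 = nat \<lceil>2 * F\<rceil>"
  define eps0 where "eps0 = min (1 / F) ((c / 8) ^ k0 / (8 * k0))"
  define s1 where "s1 eps = max 4 (max (K * (2 * log F (k0 + 1) + 3) / ((c / 8) ^ k0 / 4))
                                      (K * (2 * log F (72 / (c * eps)) + 3) / (c * eps)))" for eps
  have k0: "2 * F \<le> k0"
    unfolding k0_def by (rule real_nat_ceiling_ge)
  then have "0 < eps0"
    using assms by (simp add: eps0_def)
  have drift: "min ((c / 8) ^ k0 / 2) (c * eps) \<le> measure_pmf.expectation (sa_step c s F n f x lam)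
                 (\<lambda>(x', lam'). G4 F K x' lam' - G4 F K x lam)"
    if "0 < eps" "eps < eps0" "s1 eps \<le> s" "2 \<le> n" "x \<in> bitstrings n" "1 \<le> lam" "monotone_fun n f"
      "eps * n / 2 \<le> zeros x" "zeros x \<le> eps * n" for eps s lam :: real and n x f
  proof -
    interpret sa_drift_setting c F K eps s lam k0 n x f
      using assms k0 that by unfold_locales (auto simp: K_def eps0_def s1_def field_simps)
    show ?thesis
      by (rule drift_ge)
  qed
  have "\<exists>s1 > 0. \<forall>s \<ge> s1. \<exists>\<delta> > 0. \<exists>N. \<forall>n \<ge> N.
          \<forall>x \<in> bitstrings n. \<forall>lam \<ge> 1. \<forall>f. monotone_fun n f \<longrightarrow>
            eps * real n / 2 \<le> real (zeros x) \<and> real (zeros x) \<le> eps * real n \<longrightarrow>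
            measure_pmf.expectation (sa_step c s F n f x lam)
              (\<lambda>(x', lam'). G4 F K x' lam' - G4 F K x lam) \<ge> \<delta>"
    if "0 < eps" "eps < eps0" for eps
    by (rule exI[of _ "s1 eps"],
        intro conjI allI impI exI[of _ "min ((c / 8) ^ k0 / 2) (c * eps)"] exI[of _ "2::nat"] ballI)
       (use drift that assms in \<open>auto simp: s1_def\<close>)
  moreover have "0 < K"
    by (simp add: K_def)
  ultimately show ?thesis
    using \<open>0 < eps0\<close> by blast
qed

end
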